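(* Let $(\gamma_j)_{j\ge 1}$ be a sequence of reals with $1\ge\gamma_1\ge\gamma_2\ge\cdots\ge 0$, and consider the associated product weights $\gamma_{\mathfrak u}=\prod_{j\in\mathfrak u}\gamma_j$. The following assertions are equivalent: (1) the centered regular grid with different mesh-sizes achieves quasi polynomial tractability (QPT) for the $\boldsymbol\gamma$-weighted star discrepancy; (2) it achieves polynomial tractability (PT); (3) it achieves strong polynomial tractability (SPT); (4) the sequence $(\gamma_j)_{j\ge1}$ is eventually zero, i.e. there is $\tau$ with $\gamma_j=0$ for all $j>\tau$.
   Context: For $d\in\mathbb N$ write $[d]=\{1,\dots,d\}$. For mesh-sizes $m_1,\dots,m_d\in\mathbb N$, the centered regular grid is $\Gamma_{m_1,\dots,m_d}=\{(\frac{2\ell_1+1}{2m_1},\dots,\frac{2\ell_d+1}{2m_d}) : \ell_j\in\{0,1,\dots,m_j-1\}\text{ for } j=1,\dots,d\}$, an $N$-point set with $N=m_1\cdots m_d$. For an $N$-point set $\mathcal P_d\subset[0,1)^d$ with real coefficients $\mathcal A(\mathcal P_d)=\{a_{\boldsymbol x}:\boldsymbol x\in\mathcal P_d\}$, the local discrepancy is $\Delta_{\mathcal P_d,\mathcal A(\mathcal P_d)}(\boldsymbol\alpha)=\sum_{\boldsymbol x\in\mathcal P_d}a_{\boldsymbol x}\mathbf 1_{[\boldsymbol 0,\boldsymbol\alpha)}(\boldsymbol x)-\prod_{j=1}^d\alpha_j$ for $\boldsymbol\alpha\in[0,1]^d$, where $[\boldsymbol 0,\boldsymbol\alpha)=[0,\alpha_1)\times\cdots\times[0,\alpha_d)$.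 Given weights $\gamma_{\mathfrak u}\in[0,1]$, the $\boldsymbol\gamma$-weighted star discrepancy is $D^*_{N,\boldsymbol\gamma}(\mathcal P_d,\mathcal A(\mathcal P_d))=\sup_{\boldsymbol\alpha\in[0,1]^d}\max_{\emptyset\ne\mathfrak u\subseteq[d]}\gamma_{\mathfrak u}|\Delta_{\mathcal P_d,\mathcal A(\mathcal P_d)}((\boldsymbol\alpha_{\mathfrak u},\boldsymbol 1))|$, where $(\boldsymbol\alpha_{\mathfrak u},\boldsymbol 1)=(y_1,\dots,y_d)$ with $y_j=\alpha_j$ for $j\in\mathfrak u$ and $y_j=1$ otherwise. For $\varepsilon\in(0,1)$, $d\in\mathbb N$, let $N_{\boldsymbol\gamma}(\varepsilon,d)=\min\{N: N=m_1\cdots m_d \text{ and there exist coefficients } \mathcal A(\Gamma_{m_1,\dots,m_d}) \text{ with } D^*_{N,\boldsymbol\gamma}(\Gamma_{m_1,\dots,m_d},\mathcal A(\Gamma_{m_1,\dots,m_d}))\le\varepsilon\}$. QPT means there exist $C,t>0$ with $N_{\boldsymbol\gamma}(\varepsilon,d)\le C\exp(t(1+\log d)(1+\log\varepsilon^{-1}))$ for all $d\in\mathbb N$, $\varepsilon\in(0,1)$. PT means there exist $C,\tau>0$ and $\sigma\ge0$ with $N_{\boldsymbol\gamma}(\varepsilon,d)\le C\varepsilon^{-\tau}d^{\sigma}$ for all $d\in\mathbb N$, $\varepsilon\in(0,1)$; SPT means this holds with $\sigma=0$. *)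

theory Defs
  imports "HOL-Analysis.Analysis"
begin

text \<open>Points of [0,1)^d are modelled as functions nat => real; only the
coordinates j in {1..d} are meaningful (all other coordinates are set to 0).\<close>

definition centered_grid :: "nat \<Rightarrow> (nat \<Rightarrow> nat) \<Rightarrow> (nat \<Rightarrow> real) set" where
  "centered_grid d m =
     (\<lambda>l j. if j \<in> {1..d} then (2 * real (l j) + 1) / (2 * real (m j)) else 0)
       ` (PiE {1..d} (\<lambda>j. {..<m j}))"

definition local_disc :: "nat \<Rightarrow> (nat \<Rightarrow> real) set \<Rightarrow> ((nat \<Rightarrow> real) \<Rightarrow> real)
                          \<Rightarrow> (nat \<Rightarrow> real) \<Rightarrow> real" where
  "local_disc d P a \<alpha> =
     (\<Sum>x\<in>P. a x * (if (\<forall>j\<in>{1..d}. 0 \<le> x j \<and> x j < \<alpha> j) then 1 else 0))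
     - (\<Prod>j\<in>{1..d}. \<alpha> j)"

definition proj_one :: "nat set \<Rightarrow> (nat \<Rightarrow> real) \<Rightarrow> (nat \<Rightarrow> real)" where
  "proj_one u \<alpha> = (\<lambda>j. if j \<in> u then \<alpha> j else 1)"

definition weighted_star_disc :: "nat \<Rightarrow> (nat set \<Rightarrow> real) \<Rightarrow> (nat \<Rightarrow> real) set
                                  \<Rightarrow> ((nat \<Rightarrow> real) \<Rightarrow> real) \<Rightarrow> real" where
  "weighted_star_disc d gw P a =
     Sup {gw u * \<bar>local_disc d P a (proj_one u \<alpha>)\<bar> | \<alpha> u.
            (\<forall>j\<in>{1..d}. 0 \<le> \<alpha> j \<and> \<alpha> j \<le> 1) \<and> u \<noteq> {} \<and> u \<subseteq> {1..d}}"

definition product_weights :: "(nat \<Rightarrow> real) \<Rightarrow> nat set \<Rightarrow> real" where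
  "product_weights \<gamma> u = (\<Prod>j\<in>u. \<gamma> j)"

text \<open>Information complexity N_gamma(eps,d) for centered regular grids
  (minimum as an extended real; +infinity if no grid works).\<close>
definition N_grid :: "(nat set \<Rightarrow> real) \<Rightarrow> real \<Rightarrow> nat \<Rightarrow> ereal" where
  "N_grid gw \<epsilon> d = Inf {ereal (real N) | N. \<exists>m.
       (\<forall>j\<in>{1..d}. m j \<ge> 1) \<and> N = (\<Prod>j\<in>{1..d}. m j) \<and>
       (\<exists>a. weighted_star_disc d gw (centered_grid d m) a \<le> \<epsilon>)}"

definition QPT_grid :: "(nat set \<Rightarrow> real) \<Rightarrow> bool" where
  "QPT_grid gw \<longleftrightarrow> (\<exists>C t. C > 0 \<and> t > 0 \<and>
     (\<forall>d \<ge> 1. \<forall>\<epsilon>. 0 < \<epsilon> \<and> \<epsilon> < 1 \<longrightarrow>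
        N_grid gw \<epsilon> d \<le> ereal (C * exp (t * (1 + ln (real d)) * (1 + ln (1 / \<epsilon>))))))"

definition PT_grid :: "(nat set \<Rightarrow> real) \<Rightarrow> bool" where
  "PT_grid gw \<longleftrightarrow> (\<exists>C \<tau> \<sigma>. C > 0 \<and> \<tau> > 0 \<and> \<sigma> \<ge> 0 \<and>
     (\<forall>d \<ge> 1. \<forall>\<epsilon>. 0 < \<epsilon> \<and> \<epsilon> < 1 \<longrightarrow>
        N_grid gw \<epsilon> d \<le> ereal (C * \<epsilon> powr (-\<tau>) * real d powr \<sigma>)))"

definition SPT_grid :: "(nat set \<Rightarrow> real) \<Rightarrow> bool" where
  "SPT_grid gw \<longleftrightarrow> (\<exists>C \<tau>. C > 0 \<and> \<tau> > 0 \<and>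
     (\<forall>d \<ge> 1. \<forall>\<epsilon>. 0 < \<epsilon> \<and> \<epsilon> < 1 \<longrightarrow>
        N_grid gw \<epsilon> d \<le> ereal (C * \<epsilon> powr (-\<tau>))))"

end

(*
  If gamma_j = 0 for j > tau, only boxes anchored in the first tau coordinates carry
  weight. With mesh M in these coordinates, mesh 1 elsewhere and equal coefficients 1/N,
  the local discrepancy is a difference of two products of numbers in [0,1] whose
  factors differ by at most 1/(2M), so the weighted discrepancy is at most tau/(2M).
  Taking M about tau/eps gives N <= (2 tau/eps)^tau, independent of d: SPT, hence PT
  and QPT.

  Conversely, the box that is 1/(2 m_j) wide in coordinate j and full elsewhere
  contains no grid point, so whatever the coefficients, the discrepancy is at least
  gamma_j/(2 m_j). Discrepancy eps thus forces N >= (gamma_d/(2 eps))^d. If no gamma_j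
  vanished, choosing d > t (1 + ln d) and then eps small makes this exceed every
  quasi-polynomial bound C exp(t (1 + ln d) (1 + ln (1/eps))).
*)

theory Submission
  imports Defs "HOL-Real_Asymp.Real_Asymp"
begin

definition centered_count :: "nat \<Rightarrow> real \<Rightarrow> nat" where
  "centered_count m \<alpha> = card {k. k < m \<and> (2 * real k + 1) / (2 * real m) < \<alpha>}"

lemma centered_count_eq:
  assumes "m \<ge> 1"
  shows "centered_count m \<alpha> = min m (nat \<lceil>real m * \<alpha> - 1/2\<rceil>)"
proof -
  define x where "x = real m * \<alpha> - 1/2"
  have "real m > 0" using assms by simp
  then have "(2 * real k + 1) / (2 * real m) < \<alpha> \<longleftrightarrow> real k < x" for k
    by (simp add: x_def field_simps)
  also have "real k < x \<longleftrightarrow> k < nat \<lceil>x\<rceil>" for k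
    using less_ceiling_iff[of "int k" x] zless_nat_eq_int_zless[of k "\<lceil>x\<rceil>"] by simp
  finally have "{k. k < m \<and> (2 * real k + 1) / (2 * real m) < \<alpha>} = {..<min m (nat \<lceil>x\<rceil>)}"
    by (simp only: set_eq_iff mem_Collect_eq lessThan_iff min_less_iff_conj) blast
  then show ?thesis by (simp add: centered_count_def x_def)
qed

lemma centered_count_le: "m \<ge> 1 \<Longrightarrow> centered_count m \<alpha> \<le> m"
  by (simp add: centered_count_eq)

lemma centered_count_one:
  assumes "m \<ge> 1"
  shows "centered_count m 1 = m"
proof -
  have "\<lceil>real m - 1/2\<rceil> = int m" by (rule ceiling_unique) simp_all
  then show ?thesis using assms by (simp add: centered_count_eq)
qed

lemma abs_centered_count_diff_le:
  assumes m: "m \<ge> 1" and \<alpha>: "0 \<le> \<alpha>" "\<alpha> \<le> 1"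
  shows "\<bar>real (centered_count m \<alpha>) / real m - \<alpha>\<bar> \<le> 1 / (2 * real m)"
proof -
  define x where "x = real m * \<alpha> - 1/2"
  have "x \<ge> -1/2" using \<alpha> by (simp add: x_def)
  have "\<bar>real (centered_count m \<alpha>) - real m * \<alpha>\<bar> \<le> 1/2"
  proof (cases "nat \<lceil>x\<rceil> \<le> m")
    case True
    then have "real (centered_count m \<alpha>) = of_int \<lceil>x\<rceil>"
      using m \<open>x \<ge> -1/2\<close> by (simp add: centered_count_eq x_def[symmetric] min_absorb2)
    then show ?thesis unfolding x_def by linarith
  next
    case False
    then have "real (centered_count m \<alpha>) = real m" and "real m < x + 1"
      using m by (simp_all add: centered_count_eq x_def[symmetric]) linarith
    moreover have "real m * \<alpha> \<le> real m" using \<alpha> by (simp add: mult_left_le)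
    ultimately show ?thesis unfolding x_def by linarith
  qed
  then have "\<bar>real (centered_count m \<alpha>) - real m * \<alpha>\<bar> / real m \<le> (1/2) / real m"
    by (rule divide_right_mono) simp
  moreover have "real (centered_count m \<alpha>) / real m - \<alpha> = (real (centered_count m \<alpha>) - real m * \<alpha>) / real m"
    using m by (simp add: field_simps)
  ultimately show ?thesis by (simp add: abs_divide)
qed

lemma abs_prod_diff_le_sum_abs_diff:
  fixes a b :: "'i \<Rightarrow> real"
  assumes "finite I" "\<And>i. i \<in> I \<Longrightarrow> 0 \<le> a i \<and> a i \<le> 1" "\<And>i. i \<in> I \<Longrightarrow> 0 \<le> b i \<and> b i \<le> 1"
  shows "\<bar>(\<Prod>i\<in>I. a i) - (\<Prod>i\<in>I. b i)\<bar> \<le> (\<Sum>i\<in>I. \<bar>a i - b i\<bar>)"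
  using assms
proof (induction I rule: finite_induct)
  case empty
  then show ?case by simp
next
  case (insert j I)
  define A where "A = (\<Prod>i\<in>I. a i)"
  define B where "B = (\<Prod>i\<in>I. b i)"
  have IH: "\<bar>A - B\<bar> \<le> (\<Sum>i\<in>I. \<bar>a i - b i\<bar>)" using insert unfolding A_def B_def by auto
  have B: "0 \<le> B \<and> B \<le> 1" unfolding B_def using insert.prems by (auto intro!: prod_nonneg prod_le_1)
  have aj: "0 \<le> a j \<and> a j \<le> 1" using insert.prems by auto
  have "\<bar>a j * A - b j * B\<bar> = \<bar>a j * (A - B) + (a j - b j) * B\<bar>"
    by (simp add: algebra_simps)
  also have "\<dots> \<le> \<bar>a j\<bar> * \<bar>A - B\<bar> + \<bar>a j - b j\<bar> * \<bar>B\<bar>"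
    by (metis abs_mult abs_triangle_ineq)
  also have "\<dots> \<le> \<bar>A - B\<bar> + \<bar>a j - b j\<bar>"
    using aj B by (intro add_mono) (auto intro: mult_left_le_one_le mult_right_le_one_le)
  finally show ?case using IH insert.hyps unfolding A_def B_def by simp
qed

lemma finite_centered_grid: "finite (centered_grid d m)"
  unfolding centered_grid_def by (intro finite_imageI finite_PiE) auto

lemma centered_grid_coordinate_ge:
  assumes "x \<in> centered_grid d m" "j \<in> {1..d}" "m j \<ge> 1"
  shows "1 / (2 * real (m j)) \<le> x j"
proof -
  obtain l where "x = (\<lambda>j. if j \<in> {1..d} then (2 * real (l j) + 1) / (2 * real (m j)) else 0)"
    using assms(1) unfolding centered_grid_def by auto
  then have "x j = (2 * real (l j) + 1) / (2 * real (m j))" using assms(2) by simp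
  then show ?thesis using assms(3) by (simp add: divide_right_mono)
qed

lemma inj_on_centered_grid_index:
  assumes m: "\<forall>j\<in>{1..d}. m j \<ge> 1"
  shows "inj_on (\<lambda>l j. if j \<in> {1..d} then (2 * real (l j) + 1) / (2 * real (m j)) else 0)
           (PiE {1..d} (\<lambda>j. {..<m j}))"
proof (rule inj_onI)
  fix l l' assume l: "l \<in> PiE {1..d} (\<lambda>j. {..<m j})" "l' \<in> PiE {1..d} (\<lambda>j. {..<m j})"
    and eq: "(\<lambda>j. if j \<in> {1..d} then (2 * real (l j) + 1) / (2 * real (m j)) else 0)
      = (\<lambda>j. if j \<in> {1..d} then (2 * real (l' j) + 1) / (2 * real (m j)) else 0)"
  show "l = l'"
  proof (rule PiE_ext[OF l])
    fix i assume i: "i \<in> {1..d}"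
    then have "(2 * real (l i) + 1) / (2 * real (m i)) = (2 * real (l' i) + 1) / (2 * real (m i))"
      using fun_cong[OF eq, of i] by simp
    moreover have "m i \<ge> 1" using m i by blast
    ultimately show "l i = l' i" by (simp add: field_simps)
  qed
qed

lemma sum_centered_grid_indicator:
  assumes m: "\<forall>j\<in>{1..d}. m j \<ge> 1"
  shows "(\<Sum>x\<in>centered_grid d m. if \<forall>j\<in>{1..d}. 0 \<le> x j \<and> x j < \<beta> j then 1 else 0)
    = (\<Prod>j\<in>{1..d}. real (centered_count (m j) (\<beta> j)))"
proof -
  define g where "g = (\<lambda>l j. if j \<in> {1..d} then (2 * real (l j) + 1) / (2 * real (m j)) else 0)"
  define A where "A = PiE {1..d} (\<lambda>j. {..<m j})"
  define hit where "hit = (\<lambda>j k. (2 * real k + 1) / (2 * real (m j)) < \<beta> j)"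
  have grid: "centered_grid d m = g ` A" unfolding centered_grid_def g_def A_def by simp
  have inj: "inj_on g A" unfolding g_def A_def by (rule inj_on_centered_grid_index[OF m])
  have indicator_prod: "(if \<forall>j\<in>{1..d}. 0 \<le> g l j \<and> g l j < \<beta> j then 1 else 0)
      = (\<Prod>j\<in>{1..d}. if hit j (l j) then 1 else (0::real))" for l
  proof (cases "\<forall>j\<in>{1..d}. hit j (l j)")
    case False
    then show ?thesis by (auto simp: g_def hit_def intro!: prod_zero)
  qed (simp add: g_def hit_def)
  have "(\<Sum>x\<in>centered_grid d m. if \<forall>j\<in>{1..d}. 0 \<le> x j \<and> x j < \<beta> j then 1 else 0)
      = (\<Sum>l\<in>A. \<Prod>j\<in>{1..d}. if hit j (l j) then 1 else (0::real))"
    unfolding grid sum.reindex[OF inj] comp_def indicator_prod ..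
  also have "\<dots> = (\<Prod>j\<in>{1..d}. \<Sum>k<m j. if hit j k then 1 else 0)"
    unfolding A_def by (rule prod_sum_PiE[symmetric]) auto
  also have "\<dots> = (\<Prod>j\<in>{1..d}. real (centered_count (m j) (\<beta> j)))"
    by (simp add: sum.If_cases centered_count_def hit_def Collect_conj_eq lessThan_def Int_commute)
  finally show ?thesis .
qed

lemma abs_local_disc_centered_grid_le:
  assumes m: "\<forall>j\<in>{1..d}. m j \<ge> 1" and \<beta>: "\<forall>j\<in>{1..d}. 0 \<le> \<beta> j \<and> \<beta> j \<le> 1"
  shows "\<bar>local_disc d (centered_grid d m) (\<lambda>_. 1 / real (\<Prod>j\<in>{1..d}. m j)) \<beta>\<bar>
    \<le> (\<Sum>j\<in>{1..d}. \<bar>real (centered_count (m j) (\<beta> j)) / real (m j) - \<beta> j\<bar>)"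
proof -
  have "local_disc d (centered_grid d m) (\<lambda>_. 1 / real (\<Prod>j\<in>{1..d}. m j)) \<beta>
      = (\<Prod>j\<in>{1..d}. real (centered_count (m j) (\<beta> j)) / real (m j)) - (\<Prod>j\<in>{1..d}. \<beta> j)"
    unfolding local_disc_def sum_distrib_left[symmetric] sum_centered_grid_indicator[OF m]
    by (simp add: prod_dividef)
  also have "\<bar>\<dots>\<bar> \<le> (\<Sum>j\<in>{1..d}. \<bar>real (centered_count (m j) (\<beta> j)) / real (m j) - \<beta> j\<bar>)"
  proof (rule abs_prod_diff_le_sum_abs_diff)
    fix j assume "j \<in> {1..d}"
    then have "m j \<ge> 1" using m by blast
    then show "0 \<le> real (centered_count (m j) (\<beta> j)) / real (m j) \<and>
        real (centered_count (m j) (\<beta> j)) / real (m j) \<le> 1"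
      using centered_count_le[of "m j" "\<beta> j"] by (simp add: divide_le_eq_1)
  qed (use \<beta> in auto)
  finally show ?thesis .
qed

lemma abs_local_disc_le:
  assumes "finite P" "\<forall>j\<in>{1..d}. 0 \<le> \<beta> j \<and> \<beta> j \<le> 1"
  shows "\<bar>local_disc d P a \<beta>\<bar> \<le> (\<Sum>x\<in>P. \<bar>a x\<bar>) + 1"
proof -
  have "\<bar>\<Sum>x\<in>P. a x * (if \<forall>j\<in>{1..d}. 0 \<le> x j \<and> x j < \<beta> j then 1 else 0)\<bar> \<le> (\<Sum>x\<in>P. \<bar>a x\<bar>)"
    by (rule order.trans[OF sum_abs]) (intro sum_mono, auto)
  moreover have "0 \<le> (\<Prod>j\<in>{1..d}. \<beta> j)" "(\<Prod>j\<in>{1..d}. \<beta> j) \<le> 1"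
    using assms(2) by (auto intro: prod_nonneg prod_le_1)
  ultimately show ?thesis unfolding local_disc_def by linarith
qed

lemma proj_one_in_unit_cube:
  "\<forall>j\<in>{1..d}. 0 \<le> \<alpha> j \<and> \<alpha> j \<le> 1 \<Longrightarrow> \<forall>j\<in>{1..d}. 0 \<le> proj_one u \<alpha> j \<and> proj_one u \<alpha> j \<le> 1"
  by (simp add: proj_one_def)

lemma weighted_local_disc_le_weighted_star_disc:
  assumes "finite P" and gw: "\<And>u. u \<subseteq> {1..d} \<Longrightarrow> \<bar>gw u\<bar> \<le> 1"
    and \<alpha>: "\<forall>j\<in>{1..d}. 0 \<le> \<alpha> j \<and> \<alpha> j \<le> 1" and u: "u \<noteq> {}" "u \<subseteq> {1..d}"
  shows "gw u * \<bar>local_disc d P a (proj_one u \<alpha>)\<bar> \<le> weighted_star_disc d gw P a"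
  unfolding weighted_star_disc_def
proof (rule cSup_upper)
  show "gw u * \<bar>local_disc d P a (proj_one u \<alpha>)\<bar> \<in> {gw u * \<bar>local_disc d P a (proj_one u \<alpha>)\<bar> | \<alpha> u.
      (\<forall>j\<in>{1..d}. 0 \<le> \<alpha> j \<and> \<alpha> j \<le> 1) \<and> u \<noteq> {} \<and> u \<subseteq> {1..d}}"
    using \<alpha> u by blast
  show "bdd_above {gw u * \<bar>local_disc d P a (proj_one u \<alpha>)\<bar> | \<alpha> u.
      (\<forall>j\<in>{1..d}. 0 \<le> \<alpha> j \<and> \<alpha> j \<le> 1) \<and> u \<noteq> {} \<and> u \<subseteq> {1..d}}"
  proof (rule bdd_aboveI[where M = "(\<Sum>x\<in>P. \<bar>a x\<bar>) + 1"], clarify)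
    fix \<alpha> :: "nat \<Rightarrow> real" and u
    assume "\<forall>j\<in>{1..d}. 0 \<le> \<alpha> j \<and> \<alpha> j \<le> 1" "u \<subseteq> {1..d}"
    then have "\<bar>local_disc d P a (proj_one u \<alpha>)\<bar> \<le> (\<Sum>x\<in>P. \<bar>a x\<bar>) + 1" "\<bar>gw u\<bar> \<le> 1"
      using abs_local_disc_le[OF \<open>finite P\<close> proj_one_in_unit_cube] gw by blast+
    then have "gw u * \<bar>local_disc d P a (proj_one u \<alpha>)\<bar> \<le> 1 * \<bar>local_disc d P a (proj_one u \<alpha>)\<bar>"
      by (intro mult_right_mono) auto
    then show "gw u * \<bar>local_disc d P a (proj_one u \<alpha>)\<bar> \<le> (\<Sum>x\<in>P. \<bar>a x\<bar>) + 1"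
      using \<open>\<bar>local_disc d P a (proj_one u \<alpha>)\<bar> \<le> _\<close> by linarith
  qed
qed

lemma weighted_star_disc_le:
  assumes "d \<ge> 1"
    and "\<And>\<alpha> u. \<forall>j\<in>{1..d}. 0 \<le> \<alpha> j \<and> \<alpha> j \<le> 1 \<Longrightarrow> u \<noteq> {} \<Longrightarrow> u \<subseteq> {1..d} \<Longrightarrow>
           gw u * \<bar>local_disc d P a (proj_one u \<alpha>)\<bar> \<le> \<epsilon>"
  shows "weighted_star_disc d gw P a \<le> \<epsilon>"
  unfolding weighted_star_disc_def
proof (rule cSup_least)
  have "gw {1} * \<bar>local_disc d P a (proj_one {1} (\<lambda>_. 0))\<bar> \<in> {gw u * \<bar>local_disc d P a (proj_one u \<alpha>)\<bar> | \<alpha> u.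
      (\<forall>j\<in>{1..d}. 0 \<le> \<alpha> j \<and> \<alpha> j \<le> 1) \<and> u \<noteq> {} \<and> u \<subseteq> {1..d}}"
    using assms(1) by force
  then show "{gw u * \<bar>local_disc d P a (proj_one u \<alpha>)\<bar> | \<alpha> u.
      (\<forall>j\<in>{1..d}. 0 \<le> \<alpha> j \<and> \<alpha> j \<le> 1) \<and> u \<noteq> {} \<and> u \<subseteq> {1..d}} \<noteq> {}"
    by blast
next
  fix s assume "s \<in> {gw u * \<bar>local_disc d P a (proj_one u \<alpha>)\<bar> | \<alpha> u.
      (\<forall>j\<in>{1..d}. 0 \<le> \<alpha> j \<and> \<alpha> j \<le> 1) \<and> u \<noteq> {} \<and> u \<subseteq> {1..d}}"
  then show "s \<le> \<epsilon>" using assms(2) by blast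
qed

lemma weighted_star_disc_centered_grid_ge:
  assumes gw: "\<And>u. u \<subseteq> {1..d} \<Longrightarrow> \<bar>gw u\<bar> \<le> 1"
    and m: "\<forall>i\<in>{1..d}. m i \<ge> 1" and j: "j \<in> {1..d}"
  shows "gw {j} / (2 * real (m j)) \<le> weighted_star_disc d gw (centered_grid d m) a"
proof -
  define \<alpha> where "\<alpha> = (\<lambda>i. if i = j then 1 / (2 * real (m j)) else (1::real))"
  have "m j \<ge> 1" using m j by blast
  then have \<alpha>: "\<forall>i\<in>{1..d}. 0 \<le> \<alpha> i \<and> \<alpha> i \<le> 1" by (simp add: \<alpha>_def)
  have "proj_one {j} \<alpha> = \<alpha>" by (auto simp: proj_one_def \<alpha>_def)
  have "\<not> x j < \<alpha> j" if "x \<in> centered_grid d m" for x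
    using centered_grid_coordinate_ge[OF that j \<open>m j \<ge> 1\<close>] by (simp add: \<alpha>_def)
  then have "local_disc d (centered_grid d m) a \<alpha> = - (\<Prod>i\<in>{1..d}. \<alpha> i)"
    using j by (force simp: local_disc_def intro!: sum.neutral)
  also have "(\<Prod>i\<in>{1..d}. \<alpha> i) = 1 / (2 * real (m j))"
    using prod.remove[OF finite_atLeastAtMost j, of \<alpha>] by (simp add: \<alpha>_def)
  finally have "\<bar>local_disc d (centered_grid d m) a (proj_one {j} \<alpha>)\<bar> = 1 / (2 * real (m j))"
    using \<open>proj_one {j} \<alpha> = \<alpha>\<close> by simp
  moreover have "gw {j} * \<bar>local_disc d (centered_grid d m) a (proj_one {j} \<alpha>)\<bar>
      \<le> weighted_star_disc d gw (centered_grid d m) a"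
    using j by (intro weighted_local_disc_le_weighted_star_disc[OF finite_centered_grid gw \<alpha>]) auto
  ultimately show ?thesis by simp
qed

lemma product_weights_unit:
  assumes "\<And>j. j \<in> u \<Longrightarrow> 0 \<le> \<gamma> j \<and> \<gamma> j \<le> 1"
  shows "0 \<le> product_weights \<gamma> u \<and> product_weights \<gamma> u \<le> 1"
  unfolding product_weights_def using assms by (auto intro: prod_nonneg prod_le_1)

lemma abs_local_disc_centered_grid_mesh_le:
  fixes \<tau> M :: nat
  defines "m \<equiv> \<lambda>j. if j \<le> \<tau> then M else 1"
  assumes "M \<ge> 1" and u: "u \<subseteq> {1..d}" "u \<subseteq> {1..\<tau>}"
    and \<beta>: "\<forall>j\<in>{1..d}. 0 \<le> \<beta> j \<and> \<beta> j \<le> 1" and \<beta>_one: "\<forall>j\<in>{1..d} - u. \<beta> j = 1"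
  shows "\<bar>local_disc d (centered_grid d m) (\<lambda>_. 1 / real (\<Prod>j\<in>{1..d}. m j)) \<beta>\<bar>
    \<le> real \<tau> / (2 * real M)"
proof -
  have m: "\<forall>j\<in>{1..d}. m j \<ge> 1" using \<open>M \<ge> 1\<close> by (simp add: m_def)
  have term_le: "\<bar>real (centered_count (m j) (\<beta> j)) / real (m j) - \<beta> j\<bar>
      \<le> (if j \<in> u then 1 / (2 * real M) else 0)" if j: "j \<in> {1..d}" for j
  proof (cases "j \<in> u")
    case True
    then have "m j = M" using u(2) by (auto simp: m_def)
    then show ?thesis using abs_centered_count_diff_le[OF \<open>M \<ge> 1\<close>, of "\<beta> j"] \<beta> j True by simp
  next
    case False
    then have "\<beta> j = 1" "m j \<ge> 1" using \<beta>_one m j by blast+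
    then show ?thesis using centered_count_one[of "m j"] False by simp
  qed
  have "\<bar>local_disc d (centered_grid d m) (\<lambda>_. 1 / real (\<Prod>j\<in>{1..d}. m j)) \<beta>\<bar>
      \<le> (\<Sum>j\<in>{1..d}. \<bar>real (centered_count (m j) (\<beta> j)) / real (m j) - \<beta> j\<bar>)"
    by (rule abs_local_disc_centered_grid_le[OF m \<beta>])
  also have "\<dots> \<le> (\<Sum>j\<in>{1..d}. if j \<in> u then 1 / (2 * real M) else 0)"
    by (rule sum_mono) (rule term_le)
  also have "\<dots> = real (card u) / (2 * real M)"
    using u(1) by (simp add: sum.If_cases Int_absorb1)
  also have "\<dots> \<le> real \<tau> / (2 * real M)"
    using card_mono[OF finite_atLeastAtMost u(2)] by (simp add: divide_right_mono)
  finally show ?thesis .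
qed

lemma weighted_star_disc_centered_grid_le:
  fixes \<gamma> :: "nat \<Rightarrow> real" and \<tau> M :: nat
  defines "m \<equiv> \<lambda>j. if j \<le> \<tau> then M else 1"
  assumes \<gamma>: "\<And>j. 1 \<le> j \<Longrightarrow> 0 \<le> \<gamma> j \<and> \<gamma> j \<le> 1" and zero: "\<forall>j > \<tau>. \<gamma> j = 0"
    and "d \<ge> 1" and "M \<ge> 1"
  shows "weighted_star_disc d (product_weights \<gamma>) (centered_grid d m)
           (\<lambda>_. 1 / real (\<Prod>j\<in>{1..d}. m j)) \<le> real \<tau> / (2 * real M)"
proof (rule weighted_star_disc_le[OF \<open>d \<ge> 1\<close>])
  fix \<alpha> :: "nat \<Rightarrow> real" and u :: "nat set"
  assume \<alpha>: "\<forall>j\<in>{1..d}. 0 \<le> \<alpha> j \<and> \<alpha> j \<le> 1" and u: "u \<noteq> {}" "u \<subseteq> {1..d}"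
  show "product_weights \<gamma> u * \<bar>local_disc d (centered_grid d m) (\<lambda>_. 1 / real (\<Prod>j\<in>{1..d}. m j))
      (proj_one u \<alpha>)\<bar> \<le> real \<tau> / (2 * real M)"
  proof (cases "\<exists>j\<in>u. \<gamma> j = 0")
    case True
    then have "product_weights \<gamma> u = 0"
      unfolding product_weights_def using u(2) by (auto intro: prod_zero finite_subset)
    then show ?thesis by simp
  next
    case False
    then have "u \<subseteq> {1..\<tau>}" using zero u(2) by (force simp: not_less)
    then have "\<bar>local_disc d (centered_grid d m) (\<lambda>_. 1 / real (\<Prod>j\<in>{1..d}. m j)) (proj_one u \<alpha>)\<bar>
        \<le> real \<tau> / (2 * real M)"
      unfolding m_def using \<open>M \<ge> 1\<close> u(2) proj_one_in_unit_cube[OF \<alpha>]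
      by (intro abs_local_disc_centered_grid_mesh_le) (auto simp: proj_one_def)
    moreover have "0 \<le> product_weights \<gamma> u \<and> product_weights \<gamma> u \<le> 1"
      using u(2) by (intro product_weights_unit \<gamma>) auto
    ultimately show ?thesis by (meson abs_ge_zero mult_left_le_one_le order_trans)
  qed
qed

lemma N_grid_le_mesh_product:
  assumes "\<forall>j\<in>{1..d}. m j \<ge> 1" "weighted_star_disc d gw (centered_grid d m) a \<le> \<epsilon>"
  shows "N_grid gw \<epsilon> d \<le> ereal (real (\<Prod>j\<in>{1..d}. m j))"
  unfolding N_grid_def using assms by (intro Inf_lower) blast

lemma N_grid_ge_prod_singleton_weights:
  assumes gw: "\<And>u. u \<subseteq> {1..d} \<Longrightarrow> \<bar>gw u\<bar> \<le> 1"
    and nonneg: "\<And>j. j \<in> {1..d} \<Longrightarrow> 0 \<le> gw {j}" and "\<epsilon> > 0"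
  shows "ereal (\<Prod>j\<in>{1..d}. gw {j} / (2 * \<epsilon>)) \<le> N_grid gw \<epsilon> d"
  unfolding N_grid_def
proof (rule Inf_greatest, clarify)
  fix m :: "nat \<Rightarrow> nat" and a
  assume m: "\<forall>j\<in>{1..d}. 1 \<le> m j" and disc: "weighted_star_disc d gw (centered_grid d m) a \<le> \<epsilon>"
  have "gw {j} / (2 * \<epsilon>) \<le> real (m j)" if j: "j \<in> {1..d}" for j
  proof -
    have "gw {j} / (2 * real (m j)) \<le> \<epsilon>"
      using weighted_star_disc_centered_grid_ge[where gw = gw and a = a, OF gw m j] disc by linarith
    moreover have "real (m j) > 0" using m j by fastforce
    ultimately have "gw {j} \<le> real (m j) * (2 * \<epsilon>)" by (simp add: pos_divide_le_eq mult_ac)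
    then show ?thesis using \<open>\<epsilon> > 0\<close> by (simp add: pos_divide_le_eq)
  qed
  then have "(\<Prod>j\<in>{1..d}. gw {j} / (2 * \<epsilon>)) \<le> (\<Prod>j\<in>{1..d}. real (m j))"
    using nonneg \<open>\<epsilon> > 0\<close> by (intro prod_mono) simp
  then show "ereal (\<Prod>j\<in>{1..d}. gw {j} / (2 * \<epsilon>)) \<le> ereal (real (\<Prod>j\<in>{1..d}. m j))"
    by simp
qed

lemma SPT_grid_imp_PT_grid: "SPT_grid gw \<Longrightarrow> PT_grid gw"
  unfolding SPT_grid_def PT_grid_def
proof (elim exE conjE)
  fix C \<tau> :: real
  assume "C > 0" "\<tau> > 0" "\<forall>d\<ge>1. \<forall>\<epsilon>. 0 < \<epsilon> \<and> \<epsilon> < 1 \<longrightarrow> N_grid gw \<epsilon> d \<le> ereal (C * \<epsilon> powr - \<tau>)"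
  then show "\<exists>C \<tau> \<sigma>. 0 < C \<and> 0 < \<tau> \<and> 0 \<le> \<sigma> \<and> (\<forall>d\<ge>1. \<forall>\<epsilon>. 0 < \<epsilon> \<and> \<epsilon> < 1 \<longrightarrow>
      N_grid gw \<epsilon> d \<le> ereal (C * \<epsilon> powr - \<tau> * real d powr \<sigma>))"
    by (intro exI[of _ C] exI[of _ \<tau>] exI[of _ 0]) auto
qed

lemma PT_grid_imp_QPT_grid: "PT_grid gw \<Longrightarrow> QPT_grid gw"
  unfolding PT_grid_def QPT_grid_def
proof (elim exE conjE)
  fix C \<tau> \<sigma> :: real
  assume C: "C > 0" "\<tau> > 0" "\<sigma> \<ge> 0"
    and PT: "\<forall>d\<ge>1. \<forall>\<epsilon>. 0 < \<epsilon> \<and> \<epsilon> < 1 \<longrightarrow> N_grid gw \<epsilon> d \<le> ereal (C * \<epsilon> powr - \<tau> * real d powr \<sigma>)"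
  define t where "t = max \<tau> \<sigma>"
  have "N_grid gw \<epsilon> d \<le> ereal (C * exp (t * (1 + ln (real d)) * (1 + ln (1 / \<epsilon>))))"
    if d: "d \<ge> 1" and \<epsilon>: "0 < \<epsilon>" "\<epsilon> < 1" for d \<epsilon>
  proof -
    define a where "a = ln (real d)"
    define b where "b = ln (1 / \<epsilon>)"
    have "a \<ge> 0" "b \<ge> 0" using d \<epsilon> by (simp_all add: a_def b_def)
    moreover have "\<tau> \<le> t" "\<sigma> \<le> t" by (simp_all add: t_def)
    ultimately have "\<tau> * b \<le> t * b" "\<sigma> * a \<le> t * a" "0 \<le> t * (1 + a * b)"
      using C by (simp_all add: mult_right_mono)
    then have "\<tau> * b + \<sigma> * a \<le> t * (1 + a) * (1 + b)"
      by (simp add: algebra_simps)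
    have "\<epsilon> powr - \<tau> = exp (\<tau> * b)" "real d powr \<sigma> = exp (\<sigma> * a)"
      using d \<epsilon> by (simp_all add: powr_def a_def b_def ln_div)
    then have "C * \<epsilon> powr - \<tau> * real d powr \<sigma> = C * exp (\<tau> * b + \<sigma> * a)"
      by (simp add: exp_add)
    also have "\<dots> \<le> C * exp (t * (1 + a) * (1 + b))"
      using \<open>\<tau> * b + \<sigma> * a \<le> _\<close> C by simp
    finally have "C * \<epsilon> powr - \<tau> * real d powr \<sigma> \<le> C * exp (t * (1 + a) * (1 + b))" .
    then show ?thesis using PT d \<epsilon> unfolding a_def b_def by (meson ereal_less_eq(3) order_trans)
  qed
  then show "\<exists>C t. 0 < C \<and> 0 < t \<and> (\<forall>d\<ge>1. \<forall>\<epsilon>. 0 < \<epsilon> \<and> \<epsilon> < 1 \<longrightarrow>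
      N_grid gw \<epsilon> d \<le> ereal (C * exp (t * (1 + ln (real d)) * (1 + ln (1 / \<epsilon>)))))"
    using C by (intro exI[of _ C] exI[of _ t]) (auto simp: t_def)
qed

lemma exists_nat_gt_log_bound:
  fixes t :: real
  shows "\<exists>d::nat. d \<ge> 1 \<and> t * (1 + ln (real d)) < real d"
proof -
  have "eventually (\<lambda>n. t * (1 + ln (real n)) < real n) sequentially" by real_asymp
  then obtain N where "\<And>n. n \<ge> N \<Longrightarrow> t * (1 + ln (real n)) < real n"
    by (auto simp: eventually_sequentially)
  then show ?thesis by (intro exI[of _ "max N 1"]) auto
qed

lemma exists_eps_qpt_bound_less_power:
  fixes c C K :: real
  assumes "0 < c" "0 < C" "K < real d"
  shows "\<exists>\<epsilon>. 0 < \<epsilon> \<and> \<epsilon> < 1 \<and> C * exp (K * (1 + ln (1 / \<epsilon>))) < (c / (2 * \<epsilon>)) ^ d"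
proof -
  define \<delta> where "\<delta> = real d - K"
  define R where "R = ln C + K - real d * ln (c / 2)"
  define L where "L = max R 0 / \<delta> + 1"
  have "\<delta> > 0" using assms(3) by (simp add: \<delta>_def)
  then have "L > 0" "\<delta> * L = max R 0 + \<delta>" by (simp_all add: L_def field_simps)
  define \<epsilon> where "\<epsilon> = exp (- L)"
  have \<epsilon>: "0 < \<epsilon>" "\<epsilon> < 1" "ln (1 / \<epsilon>) = L" using \<open>L > 0\<close> by (simp_all add: \<epsilon>_def ln_div)
  have "c / (2 * \<epsilon>) = exp (ln (c / 2) + L)"
    using assms(1) by (simp add: \<epsilon>_def exp_add exp_minus field_simps)
  then have "ln ((c / (2 * \<epsilon>)) ^ d) = real d * (ln (c / 2) + L)"
    by (simp add: ln_realpow)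
  moreover have "ln (C * exp (K * (1 + ln (1 / \<epsilon>)))) = ln C + K * (1 + L)"
    using assms(2) \<epsilon>(3) by (simp add: ln_mult)
  moreover have "ln C + K * (1 + L) < real d * (ln (c / 2) + L)"
    using \<open>\<delta> * L = max R 0 + \<delta>\<close> \<open>\<delta> > 0\<close> unfolding \<delta>_def R_def by (simp add: algebra_simps)
  ultimately have "ln (C * exp (K * (1 + ln (1 / \<epsilon>)))) < ln ((c / (2 * \<epsilon>)) ^ d)" by simp
  then show ?thesis using \<epsilon> assms(1,2) by (intro exI[of _ \<epsilon>]) simp
qed

lemma N_grid_product_weights_ge_power:
  fixes \<gamma> :: "nat \<Rightarrow> real"
  assumes unit: "\<And>j. 1 \<le> j \<Longrightarrow> 0 \<le> \<gamma> j \<and> \<gamma> j \<le> 1"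
    and mono: "\<And>i j. 1 \<le> i \<Longrightarrow> i \<le> j \<Longrightarrow> \<gamma> j \<le> \<gamma> i"
    and "d \<ge> 1" "\<epsilon> > 0"
  shows "ereal ((\<gamma> d / (2 * \<epsilon>)) ^ d) \<le> N_grid (product_weights \<gamma>) \<epsilon> d"
proof -
  have "(\<gamma> d / (2 * \<epsilon>)) ^ d = (\<Prod>j\<in>{1..d}. \<gamma> d / (2 * \<epsilon>))" by simp
  also have "\<dots> \<le> (\<Prod>j\<in>{1..d}. product_weights \<gamma> {j} / (2 * \<epsilon>))"
  proof (rule prod_mono)
    fix j assume "j \<in> {1..d}"
    then have "0 \<le> \<gamma> d" "\<gamma> d \<le> \<gamma> j" using unit[of d] mono[of j d] \<open>d \<ge> 1\<close> by auto
    then show "0 \<le> \<gamma> d / (2 * \<epsilon>) \<and> \<gamma> d / (2 * \<epsilon>) \<le> product_weights \<gamma> {j} / (2 * \<epsilon>)"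
      using \<open>\<epsilon> > 0\<close> by (simp add: product_weights_def divide_right_mono)
  qed
  finally have "ereal ((\<gamma> d / (2 * \<epsilon>)) ^ d) \<le> ereal (\<Prod>j\<in>{1..d}. product_weights \<gamma> {j} / (2 * \<epsilon>))"
    by simp
  also have "\<dots> \<le> N_grid (product_weights \<gamma>) \<epsilon> d"
  proof (rule N_grid_ge_prod_singleton_weights[OF _ _ \<open>\<epsilon> > 0\<close>])
    show "\<bar>product_weights \<gamma> u\<bar> \<le> 1" if "u \<subseteq> {1..d}" for u
      using product_weights_unit[of u \<gamma>] unit that by fastforce
    show "0 \<le> product_weights \<gamma> {j}" if "j \<in> {1..d}" for j
      using unit that by (simp add: product_weights_def)
  qed
  finally show ?thesis .
qed

lemma QPT_grid_product_weights_imp_eventually_zero: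
  fixes \<gamma> :: "nat \<Rightarrow> real"
  assumes unit: "\<And>j. 1 \<le> j \<Longrightarrow> 0 \<le> \<gamma> j \<and> \<gamma> j \<le> 1"
    and mono: "\<And>i j. 1 \<le> i \<Longrightarrow> i \<le> j \<Longrightarrow> \<gamma> j \<le> \<gamma> i"
    and "QPT_grid (product_weights \<gamma>)"
  shows "\<exists>\<tau>::nat. \<forall>j > \<tau>. \<gamma> j = 0"
proof (rule ccontr)
  assume "\<not> (\<exists>\<tau>::nat. \<forall>j > \<tau>. \<gamma> j = 0)"
  then have pos: "\<gamma> j > 0" if "j \<ge> 1" for j
  proof -
    obtain j' where "j' > j" "\<gamma> j' \<noteq> 0" using \<open>\<not> (\<exists>\<tau>. _)\<close> by blast
    moreover have "\<gamma> j' \<le> \<gamma> j" "0 \<le> \<gamma> j'" using mono[of j j'] unit[of j'] that \<open>j' > j\<close> by simp_all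
    ultimately show ?thesis by linarith
  qed
  obtain C t where "C > 0" and QPT: "\<forall>d \<ge> 1. \<forall>\<epsilon>. 0 < \<epsilon> \<and> \<epsilon> < 1 \<longrightarrow>
      N_grid (product_weights \<gamma>) \<epsilon> d \<le> ereal (C * exp (t * (1 + ln (real d)) * (1 + ln (1 / \<epsilon>))))"
    using assms(3) unfolding QPT_grid_def by blast
  obtain d :: nat where "d \<ge> 1" and d: "t * (1 + ln (real d)) < real d"
    using exists_nat_gt_log_bound by blast
  obtain \<epsilon> where \<epsilon>: "0 < \<epsilon>" "\<epsilon> < 1"
    and less: "C * exp (t * (1 + ln (real d)) * (1 + ln (1 / \<epsilon>))) < (\<gamma> d / (2 * \<epsilon>)) ^ d"
    using exists_eps_qpt_bound_less_power[OF pos[OF \<open>d \<ge> 1\<close>] \<open>C > 0\<close> d] by blast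
  have "ereal ((\<gamma> d / (2 * \<epsilon>)) ^ d) \<le> N_grid (product_weights \<gamma>) \<epsilon> d"
    using unit mono \<open>d \<ge> 1\<close> \<epsilon>(1) by (rule N_grid_product_weights_ge_power)
  also have "\<dots> \<le> ereal (C * exp (t * (1 + ln (real d)) * (1 + ln (1 / \<epsilon>))))"
    using QPT \<open>d \<ge> 1\<close> \<epsilon> by blast
  finally show False using less by simp
qed

lemma prod_mesh_le_power:
  fixes M \<tau> :: nat
  assumes "M \<ge> 1"
  shows "(\<Prod>j\<in>{1..d}. if j \<le> \<tau> then M else 1) \<le> M ^ \<tau>"
proof -
  have "(\<Prod>j\<in>{1..d}. if j \<le> \<tau> then M else 1) = M ^ card ({1..d} \<inter> {j. j \<le> \<tau>})"
    by (simp add: prod.If_cases)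
  also have "\<dots> \<le> M ^ \<tau>"
  proof (rule power_increasing[OF _ assms])
    have "card ({1..d} \<inter> {j. j \<le> \<tau>}) \<le> card {1..\<tau>}" by (rule card_mono) auto
    then show "card ({1..d} \<inter> {j. j \<le> \<tau>}) \<le> \<tau>" by simp
  qed
  finally show ?thesis .
qed

lemma eventually_zero_imp_SPT_grid_product_weights:
  fixes \<gamma> :: "nat \<Rightarrow> real"
  assumes unit: "\<And>j. 1 \<le> j \<Longrightarrow> 0 \<le> \<gamma> j \<and> \<gamma> j \<le> 1" and "\<exists>\<tau>::nat. \<forall>j > \<tau>. \<gamma> j = 0"
  shows "SPT_grid (product_weights \<gamma>)"
proof -
  obtain \<tau>' :: nat where "\<forall>j > \<tau>'. \<gamma> j = 0" using assms(2) by blast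
  \<comment> \<open>SPT asks for a positive exponent, and \<open>\<tau>\<close> becomes that exponent.\<close>
  define \<tau> where "\<tau> = Suc \<tau>'"
  have "\<tau> \<ge> 1" and zero: "\<forall>j > \<tau>. \<gamma> j = 0" using \<open>\<forall>j > \<tau>'. \<gamma> j = 0\<close> by (simp_all add: \<tau>_def)
  have "N_grid (product_weights \<gamma>) \<epsilon> d \<le> ereal ((2 * real \<tau>) ^ \<tau> * \<epsilon> powr - real \<tau>)"
    if "d \<ge> 1" "0 < \<epsilon>" "\<epsilon> < 1" for d \<epsilon>
  proof -
    define M where "M = nat \<lceil>real \<tau> / \<epsilon>\<rceil>"
    define m where "m = (\<lambda>j. if j \<le> \<tau> then M else 1)"
    have "real \<tau> / \<epsilon> \<ge> 1" using \<open>\<tau> \<ge> 1\<close> that by (simp add: field_simps)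
    then have M: "real \<tau> / \<epsilon> \<le> real M" "real M \<le> 2 * real \<tau> / \<epsilon>" "M \<ge> 1"
      unfolding M_def by linarith+
    have "weighted_star_disc d (product_weights \<gamma>) (centered_grid d m) (\<lambda>_. 1 / real (\<Prod>j\<in>{1..d}. m j))
        \<le> real \<tau> / (2 * real M)"
      unfolding m_def using unit zero \<open>d \<ge> 1\<close> \<open>M \<ge> 1\<close>
      by (rule weighted_star_disc_centered_grid_le[where \<gamma> = \<gamma> and \<tau> = \<tau> and M = M])
    also have "\<dots> \<le> \<epsilon>"
      using M that by (simp add: field_simps)
    finally have "N_grid (product_weights \<gamma>) \<epsilon> d \<le> ereal (real (\<Prod>j\<in>{1..d}. m j))"
      using \<open>M \<ge> 1\<close> by (intro N_grid_le_mesh_product) (auto simp: m_def)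
    also have "real (\<Prod>j\<in>{1..d}. m j) \<le> real M ^ \<tau>"
      using prod_mesh_le_power[where d = d and \<tau> = \<tau>, OF \<open>M \<ge> 1\<close>] unfolding m_def
      by (simp only: of_nat_power[symmetric] of_nat_le_iff)
    also have "\<dots> \<le> (2 * real \<tau> / \<epsilon>) ^ \<tau>"
      using M by (intro power_mono) auto
    also have "\<dots> = (2 * real \<tau>) ^ \<tau> * \<epsilon> powr - real \<tau>"
      using that by (simp add: powr_minus_divide powr_realpow power_divide)
    finally show ?thesis by simp
  qed
  moreover have "(2 * real \<tau>) ^ \<tau> > 0" "real \<tau> > 0" using \<open>\<tau> \<ge> 1\<close> by simp_all
  ultimately show ?thesis
    unfolding SPT_grid_def by blast
qed

theorem theorem2:
  fixes \<gamma> :: "nat \<Rightarrow> real"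
  assumes "\<gamma> 1 \<le> 1"
    and "\<And>i j. 1 \<le> i \<Longrightarrow> i \<le> j \<Longrightarrow> \<gamma> j \<le> \<gamma> i"
    and "\<And>j. 1 \<le> j \<Longrightarrow> 0 \<le> \<gamma> j"
  shows "(QPT_grid (product_weights \<gamma>) \<longleftrightarrow> PT_grid (product_weights \<gamma>)) \<and>
         (PT_grid (product_weights \<gamma>) \<longleftrightarrow> SPT_grid (product_weights \<gamma>)) \<and>
         (SPT_grid (product_weights \<gamma>) \<longleftrightarrow> (\<exists>\<tau>::nat. \<forall>j > \<tau>. \<gamma> j = 0))"
proof -
  have unit: "0 \<le> \<gamma> j \<and> \<gamma> j \<le> 1" if "1 \<le> j" for j
    using assms(1) assms(2)[of 1 j] assms(3)[of j] that by simp
  show ?thesis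
    using QPT_grid_product_weights_imp_eventually_zero[where \<gamma> = \<gamma>, OF unit assms(2)]
      eventually_zero_imp_SPT_grid_product_weights[where \<gamma> = \<gamma>, OF unit]
      SPT_grid_imp_PT_grid PT_grid_imp_QPT_grid
    by blast
qed

end
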